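(* Let $q$ be a prime power and $m\in\mathbb N$. Then the subring $R=\mathbb F_q+t\,\mathbb F_{q^m}[[t]]$ of the power series ring $\mathbb F_{q^m}[[t]]$ is a U-FFD.
   Context: An integral domain is a U-FFD if every nonzero element that is a unit or a finite product of irreducibles has only finitely many factorizations into irreducibles, counted up to order and associates. *)

theory Defs
  imports "HOL-Computational_Algebra.Primes" "HOL-Computational_Algebra.Formal_Power_Series"
begin

definition is_subring :: "'a::comm_ring_1 set \<Rightarrow> bool" where
  "is_subring R \<longleftrightarrow> 0 \<in> R \<and> 1 \<in> R \<and>
     (\<forall>a\<in>R. \<forall>b\<in>R. a + b \<in> R \<and> a - b \<in> R \<and> a * b \<in> R)"

definition is_subfield :: "'a::field set \<Rightarrow> bool" where
  "is_subfield K \<longleftrightarrow> is_subring K \<and> (\<forall>a\<in>K. a \<noteq> 0 \<longrightarrow> inverse a \<in> K)"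

definition unit_in :: "'a::comm_ring_1 set \<Rightarrow> 'a \<Rightarrow> bool" where
  "unit_in R u \<longleftrightarrow> u \<in> R \<and> (\<exists>v\<in>R. u * v = 1)"

definition irred_in :: "'a::comm_ring_1 set \<Rightarrow> 'a \<Rightarrow> bool" where
  "irred_in R x \<longleftrightarrow> x \<in> R \<and> x \<noteq> 0 \<and> \<not> unit_in R x \<and>
     (\<forall>a\<in>R. \<forall>b\<in>R. x = a * b \<longrightarrow> unit_in R a \<or> unit_in R b)"

definition assoc_in :: "'a::comm_ring_1 set \<Rightarrow> 'a \<Rightarrow> 'a \<Rightarrow> bool" where
  "assoc_in R x y \<longleftrightarrow> (\<exists>u. unit_in R u \<and> y = u * x)"

definition factorizations_in :: "'a::comm_ring_1 set \<Rightarrow> 'a \<Rightarrow> 'a list set" where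
  "factorizations_in R x = {fs. (\<forall>f\<in>set fs. irred_in R f) \<and> prod_list fs = x}"

definition fact_equiv :: "'a::comm_ring_1 set \<Rightarrow> 'a list \<Rightarrow> 'a list \<Rightarrow> bool" where
  "fact_equiv R fs gs \<longleftrightarrow> length fs = length gs \<and>
     (\<exists>p. bij_betw p {..<length fs} {..<length fs} \<and>
          (\<forall>i<length fs. assoc_in R (fs ! i) (gs ! p i)))"

text \<open>U-FFD: R is a subring (of an integral domain type, hence an integral domain) and every nonzero
  element that is a unit or a finite product of irreducibles has only finitely many
  factorizations up to order and associates.\<close>
definition U_FFD :: "'a::idom set \<Rightarrow> bool" where
  "U_FFD R \<longleftrightarrow> is_subring R \<and>
     (\<forall>x\<in>R. x \<noteq> 0 \<and> (unit_in R x \<or> factorizations_in R x \<noteq> {}) \<longrightarrow>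
        (\<exists>F. finite F \<and> F \<subseteq> factorizations_in R x \<and>
             (\<forall>fs\<in>factorizations_in R x. \<exists>gs\<in>F. fact_equiv R fs gs)))"

end

theory Submission
  imports Defs
begin

text \<open>An irreducible f of R is not a unit, so f(0) = 0, and it has order exactly one in t:
  otherwise f = t \<cdot> (f/t) would split into two non-units of R. Hence every factorization of x
  has length ord x, and two irreducibles with the same coefficient of t differ by a unit with
  constant term 1. A factorization is therefore determined up to associates by the t-coefficients
  of its factors, of which there are only finitely many choices. Only the finiteness of the field
  of coefficients is used.\<close>

unbundle fps_syntax

abbreviation fps_const_term_in :: "'a::field set \<Rightarrow> 'a fps set" where
  "fps_const_term_in K \<equiv> {f. f $ 0 \<in> K}"

lemma is_subring_fps_const_term_in:
  assumes "is_subfield K"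
  shows "is_subring (fps_const_term_in K)"
  using assms unfolding is_subfield_def is_subring_def by auto

lemma unit_in_fps_const_term_in_iff:
  assumes K: "is_subfield K"
  shows "unit_in (fps_const_term_in K) u \<longleftrightarrow> u $ 0 \<in> K \<and> u $ 0 \<noteq> 0"
proof
  assume "unit_in (fps_const_term_in K) u"
  then obtain v where "u $ 0 \<in> K" "u * v = 1" unfolding unit_in_def by auto
  moreover from \<open>u * v = 1\<close> have "u $ 0 * v $ 0 = 1" by (metis fps_mult_nth_0 fps_one_nth)
  ultimately show "u $ 0 \<in> K \<and> u $ 0 \<noteq> 0" by auto
next
  assume u0: "u $ 0 \<in> K \<and> u $ 0 \<noteq> 0"
  with K have "inverse u \<in> fps_const_term_in K" unfolding is_subfield_def by simp
  with u0 show "unit_in (fps_const_term_in K) u"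
    unfolding unit_in_def by (intro conjI bexI[of _ "inverse u"]) (auto intro: inverse_mult_eq_1')
qed

lemma subdegree_irred_in_fps_const_term_in:
  assumes K: "is_subfield K" and irr: "irred_in (fps_const_term_in K) f"
  shows "subdegree f = 1"
proof -
  let ?R = "fps_const_term_in K"
  have "f \<in> ?R" "f \<noteq> 0" "\<not> unit_in ?R f"
    using irr unfolding irred_in_def by auto
  with K have "f $ 0 = 0" by (simp add: unit_in_fps_const_term_in_iff)
  with \<open>f \<noteq> 0\<close> have pos: "subdegree f \<ge> 1"
    by (metis less_one not_le nth_subdegree_nonzero)
  show ?thesis
  proof (rule ccontr)
    assume "subdegree f \<noteq> 1"
    with pos have "f $ 1 = 0" by (intro nth_less_subdegree_zero) simp
    have split: "f = fps_X * fps_shift 1 f"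
      using fps_shift_times_fps_X[OF pos] by (simp add: mult.commute)
    have "0 \<in> K" using K unfolding is_subfield_def is_subring_def by simp
    with \<open>f $ 1 = 0\<close> have "fps_X \<in> ?R" "fps_shift 1 f \<in> ?R" by auto
    with irr split have "unit_in ?R fps_X \<or> unit_in ?R (fps_shift 1 f)"
      unfolding irred_in_def by blast
    with K \<open>f $ 1 = 0\<close> show False by (simp add: unit_in_fps_const_term_in_iff)
  qed
qed

lemma subdegree_prod_list:
  fixes fs :: "'a::idom fps list"
  assumes "0 \<notin> set fs"
  shows "subdegree (prod_list fs) = sum_list (map subdegree fs)"
  using assms by (induction fs) (auto simp: prod_list_zero_iff)

lemma length_factorizations_in_fps_const_term_in:
  assumes K: "is_subfield K" and fs: "fs \<in> factorizations_in (fps_const_term_in K) x"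
  shows "length fs = subdegree x"
proof -
  have irr: "\<forall>f\<in>set fs. irred_in (fps_const_term_in K) f"
    using fs unfolding factorizations_in_def by blast
  hence "0 \<notin> set fs" unfolding irred_in_def by blast
  hence "subdegree (prod_list fs) = sum_list (map subdegree fs)"
    by (rule subdegree_prod_list)
  also have "\<dots> = sum_list (map (\<lambda>_. 1) fs)"
    using irr subdegree_irred_in_fps_const_term_in[OF K] by (intro arg_cong[of _ _ sum_list]) simp
  finally show ?thesis using fs unfolding factorizations_in_def by (simp add: sum_list_triv)
qed

lemma assoc_in_fps_const_term_in:
  assumes K: "is_subfield K"
    and f: "irred_in (fps_const_term_in K) f" and g: "irred_in (fps_const_term_in K) g"
    and eq: "f $ 1 = g $ 1"
  shows "assoc_in (fps_const_term_in K) f g"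
proof -
  have "subdegree f = 1" "subdegree g = 1" "f \<noteq> 0"
    using f g subdegree_irred_in_fps_const_term_in[OF K] unfolding irred_in_def by auto
  define a b where "a = fps_shift 1 f" and "b = fps_shift 1 g"
  have fa: "f = fps_X * a"
    unfolding a_def using fps_shift_times_fps_X[of f] \<open>subdegree f = 1\<close> by (simp add: mult.commute)
  have gb: "g = fps_X * b"
    unfolding b_def using fps_shift_times_fps_X[of g] \<open>subdegree g = 1\<close> by (simp add: mult.commute)
  have "a $ 0 = b $ 0" "a $ 0 \<noteq> 0"
    unfolding a_def b_def using eq \<open>f \<noteq> 0\<close> \<open>subdegree f = 1\<close>
    by (auto, metis nth_subdegree_nonzero)
  define u where "u = b * inverse a"
  have "u $ 0 = 1" unfolding u_def using \<open>a $ 0 = b $ 0\<close> \<open>a $ 0 \<noteq> 0\<close> by simp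
  moreover have "1 \<in> K" using K unfolding is_subfield_def is_subring_def by simp
  ultimately have "unit_in (fps_const_term_in K) u"
    using K by (simp add: unit_in_fps_const_term_in_iff)
  moreover have "g = u * f"
    unfolding u_def fa gb using \<open>a $ 0 \<noteq> 0\<close> by (simp add: ac_simps inverse_mult_eq_1')
  ultimately show ?thesis unfolding assoc_in_def by blast
qed

lemma fact_equiv_if_nth_assoc_in:
  assumes "length fs = length gs" and "\<And>i. i < length fs \<Longrightarrow> assoc_in R (fs ! i) (gs ! i)"
  shows "fact_equiv R fs gs"
  unfolding fact_equiv_def using assms by (intro conjI exI[of _ id]) auto

lemma finite_representatives_if_finite_key:
  assumes "finite (key ` A)" and "\<And>a b. a \<in> A \<Longrightarrow> b \<in> A \<Longrightarrow> key a = key b \<Longrightarrow> E a b"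
  shows "\<exists>F. finite F \<and> F \<subseteq> A \<and> (\<forall>a\<in>A. \<exists>b\<in>F. E a b)"
proof -
  define rep where "rep k = (SOME a. a \<in> A \<and> key a = k)" for k
  have rep: "rep (key a) \<in> A \<and> key (rep (key a)) = key a" if "a \<in> A" for a
    unfolding rep_def by (rule someI[of _ a]) (use that in simp)
  show ?thesis
  proof (intro exI conjI)
    show "finite (rep ` key ` A)" using assms(1) by simp
    show "rep ` key ` A \<subseteq> A" using rep by auto
    show "\<forall>a\<in>A. \<exists>b\<in>rep ` key ` A. E a b" using rep assms(2) by (metis image_eqI)
  qed
qed

lemma fact_equiv_if_coeff1_eq:
  assumes K: "is_subfield K"
    and fs: "fs \<in> factorizations_in (fps_const_term_in K) x"
    and gs: "gs \<in> factorizations_in (fps_const_term_in K) x"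
    and key: "map (\<lambda>f. f $ 1) fs = map (\<lambda>f. f $ 1) gs"
  shows "fact_equiv (fps_const_term_in K) fs gs"
proof -
  have len: "length fs = length gs" using map_eq_imp_length_eq[OF key] .
  show ?thesis
  proof (rule fact_equiv_if_nth_assoc_in[OF len])
    fix i assume i: "i < length fs"
    have "fs ! i $ 1 = gs ! i $ 1" using arg_cong[OF key, of "\<lambda>l. l ! i"] i len by simp
    moreover have "irred_in (fps_const_term_in K) (fs ! i)" "irred_in (fps_const_term_in K) (gs ! i)"
      using fs gs i len unfolding factorizations_in_def by auto
    ultimately show "assoc_in (fps_const_term_in K) (fs ! i) (gs ! i)"
      using assoc_in_fps_const_term_in[OF K] by blast
  qed
qed

lemma finite_coeff1_factorizations_in:
  fixes K :: "'a::{field,finite} set"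
  assumes "is_subfield K"
  shows "finite (map (\<lambda>f. f $ 1) ` factorizations_in (fps_const_term_in K) x)"
proof (rule finite_subset)
  show "map (\<lambda>f. f $ 1) ` factorizations_in (fps_const_term_in K) x \<subseteq> {l. length l = subdegree x}"
    using length_factorizations_in_fps_const_term_in[OF assms] by auto
  show "finite {l :: 'a list. length l = subdegree x}"
    using finite_lists_length_eq[OF finite_UNIV] by simp
qed

theorem mainTheorem10:
  fixes q m :: nat and K :: "'a::{field,finite} set"
  assumes "\<exists>p k. prime p \<and> k \<ge> 1 \<and> q = p ^ k"
    and "card (UNIV :: 'a set) = q ^ m"
    and "is_subfield K" and "card K = q"
  shows "U_FFD {f :: 'a fps. fps_nth f 0 \<in> K}"
proof -
  note K = \<open>is_subfield K\<close>
  let ?R = "fps_const_term_in K"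
  have "\<exists>F. finite F \<and> F \<subseteq> factorizations_in ?R x \<and>
          (\<forall>fs\<in>factorizations_in ?R x. \<exists>gs\<in>F. fact_equiv ?R fs gs)" for x
    using finite_coeff1_factorizations_in[OF K] fact_equiv_if_coeff1_eq[OF K]
    by (rule finite_representatives_if_finite_key)
  with is_subring_fps_const_term_in[OF K] show ?thesis unfolding U_FFD_def by simp
qed

end
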